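(* Let $\mathcal{G}$ be an ample Hausdorff groupoid and $R$ a commutative ring with unit. If the Steinberg algebra $A_R(\mathcal{G})$ is von Neumann regular, then for all units $u,v\in\mathcal{G}^{(0)}$ and every $x\in R\mathcal{G}_u^v$ there exists $y\in R\mathcal{G}_v^u$ with $xyx=x$ (product computed in the groupoid ring $R\mathcal{G}$).
   Context: A topological groupoid $\mathcal{G}$ has domain and range maps $d(x)=x^{-1}x$, $r(x)=xx^{-1}$, unit space $\mathcal{G}^{(0)}=d(\mathcal{G})$; $(x,y)$ is composable iff $d(x)=r(y)$. It is étale if $d$ is a local homeomorphism; an open bisection is an open $U\subseteq\mathcal{G}$ with $d|_U,r|_U$ homeomorphisms onto open subsets of $\mathcal{G}^{(0)}$; $\mathcal{G}$ is ample if it is étale with a basis of compact open bisections. For a commutative unital ring $R$, the Steinberg algebra $A_R(\mathcal{G})$ is the $R$-module of compactly supported locally constant (continuous, $R$ discrete) functions $\mathcal{G}\to R$, with pointwise addition and convolution $(f*g)(\gamma)=\sum_{\gamma=\alpha\beta}f(\alpha)g(\beta)$. For $u,v\in\mathcal{G}^{(0)}$, $\mathcal{G}_u^v=\{\gamma\in\mathcal{G}: d(\gamma)=u,\ r(\gamma)=v\}$. $R\mathcal{G}$ is the groupoid ring: the free $R$-module on $\mathcal{G}$ with product $g\cdot h=gh$ if $d(g)=r(h)$ and $0$ otherwise; $R\mathcal{G}_u^v\subseteq R\mathcal{G}$ is the set of finite $R$-linear combinations of elements of $\mathcal{G}_u^v$. A ring $A$ is von Neumann regular if $x\in xAx$ for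 all $x\in A$. *)

theory Defs
  imports "HOL-Analysis.Analysis"
begin

text \<open>A groupoid is modelled on the whole type 'g, with a total multiplication
  m (only meaningful on composable pairs) and an inversion iv.
  d x = x^-1 x, r x = x x^-1; (x,y) is composable iff d x = r y.\<close>

definition gdom :: "('g \<Rightarrow> 'g \<Rightarrow> 'g) \<Rightarrow> ('g \<Rightarrow> 'g) \<Rightarrow> 'g \<Rightarrow> 'g" where
  "gdom m iv x = m (iv x) x"

definition gran :: "('g \<Rightarrow> 'g \<Rightarrow> 'g) \<Rightarrow> ('g \<Rightarrow> 'g) \<Rightarrow> 'g \<Rightarrow> 'g" where
  "gran m iv x = m x (iv x)"

definition unit_space :: "('g \<Rightarrow> 'g \<Rightarrow> 'g) \<Rightarrow> ('g \<Rightarrow> 'g) \<Rightarrow> 'g set" where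
  "unit_space m iv = range (gdom m iv)"

definition groupoid :: "('g \<Rightarrow> 'g \<Rightarrow> 'g) \<Rightarrow> ('g \<Rightarrow> 'g) \<Rightarrow> bool" where
  "groupoid m iv \<longleftrightarrow>
     (\<forall>x. iv (iv x) = x) \<and>
     (\<forall>x y. gdom m iv x = gran m iv y \<longrightarrow>
        gdom m iv (m x y) = gdom m iv y \<and> gran m iv (m x y) = gran m iv x) \<and>
     (\<forall>x y z. gdom m iv x = gran m iv y \<longrightarrow> gdom m iv y = gran m iv z \<longrightarrow>
        m (m x y) z = m x (m y z)) \<and>
     (\<forall>x y. gdom m iv x = gran m iv y \<longrightarrow> m (iv x) (m x y) = y \<and> m (m x y) (iv y) = x) \<and>
     (\<forall>x. m (gran m iv x) x = x \<and> m x (gdom m iv x) = x)"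

definition topological_groupoid :: "('g::topological_space \<Rightarrow> 'g \<Rightarrow> 'g) \<Rightarrow> ('g \<Rightarrow> 'g) \<Rightarrow> bool" where
  "topological_groupoid m iv \<longleftrightarrow> groupoid m iv \<and>
     continuous_on {(x, y). gdom m iv x = gran m iv y} (\<lambda>(x, y). m x y) \<and>
     continuous_on UNIV iv"

definition homeo_onto_open_units ::
  "('g::topological_space \<Rightarrow> 'g \<Rightarrow> 'g) \<Rightarrow> ('g \<Rightarrow> 'g) \<Rightarrow> ('g \<Rightarrow> 'g) \<Rightarrow> 'g set \<Rightarrow> bool" where
  "homeo_onto_open_units m iv f U \<longleftrightarrow>
     (\<exists>g. homeomorphism U (f ` U) f g) \<and> openin (top_of_set (unit_space m iv)) (f ` U)"

definition etale :: "('g::topological_space \<Rightarrow> 'g \<Rightarrow> 'g) \<Rightarrow> ('g \<Rightarrow> 'g) \<Rightarrow> bool" where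
  "etale m iv \<longleftrightarrow> topological_groupoid m iv \<and>
     (\<forall>x. \<exists>U. open U \<and> x \<in> U \<and> homeo_onto_open_units m iv (gdom m iv) U)"

definition open_bisection :: "('g::topological_space \<Rightarrow> 'g \<Rightarrow> 'g) \<Rightarrow> ('g \<Rightarrow> 'g) \<Rightarrow> 'g set \<Rightarrow> bool" where
  "open_bisection m iv U \<longleftrightarrow> open U \<and>
     homeo_onto_open_units m iv (gdom m iv) U \<and> homeo_onto_open_units m iv (gran m iv) U"

definition ample :: "('g::topological_space \<Rightarrow> 'g \<Rightarrow> 'g) \<Rightarrow> ('g \<Rightarrow> 'g) \<Rightarrow> bool" where
  "ample m iv \<longleftrightarrow> etale m iv \<and>
     topological_basis {U. compact U \<and> open_bisection m iv U}"

text \<open>The same formula is the product of the groupoid ring RG (the bilinear extension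
  of g.h = gh if composable, 0 otherwise) on finitely supported functions.\<close>
definition conv :: "('g \<Rightarrow> 'g \<Rightarrow> 'g) \<Rightarrow> ('g \<Rightarrow> 'g) \<Rightarrow> ('g \<Rightarrow> 'r::comm_ring_1) \<Rightarrow> ('g \<Rightarrow> 'r) \<Rightarrow> 'g \<Rightarrow> 'r" where
  "conv m iv f g \<gamma> =
     (\<Sum>(\<alpha>, \<beta>) \<in> {(\<alpha>, \<beta>). gdom m iv \<alpha> = gran m iv \<beta> \<and> m \<alpha> \<beta> = \<gamma> \<and> f \<alpha> \<noteq> 0 \<and> g \<beta> \<noteq> 0}.
        f \<alpha> * g \<beta>)"

definition steinberg :: "('g::topological_space \<Rightarrow> 'r::comm_ring_1) set" where
  "steinberg = {f. compact (closure {x. f x \<noteq> 0}) \<and>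
     (\<forall>x. \<exists>U. open U \<and> x \<in> U \<and> (\<forall>y\<in>U. f y = f x))}"

definition von_neumann_regular_steinberg ::
  "('g::topological_space \<Rightarrow> 'g \<Rightarrow> 'g) \<Rightarrow> ('g \<Rightarrow> 'g) \<Rightarrow> 'r::comm_ring_1 itself \<Rightarrow> bool" where
  "von_neumann_regular_steinberg m iv _ \<longleftrightarrow>
     (\<forall>f \<in> (steinberg :: ('g \<Rightarrow> 'r) set). \<exists>g \<in> steinberg. conv m iv (conv m iv f g) f = f)"

definition groupoid_ring_hom :: "('g \<Rightarrow> 'g \<Rightarrow> 'g) \<Rightarrow> ('g \<Rightarrow> 'g) \<Rightarrow> 'g \<Rightarrow> 'g \<Rightarrow> ('g \<Rightarrow> 'r::comm_ring_1) set" where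
  "groupoid_ring_hom m iv u v = {x. finite {\<gamma>. x \<gamma> \<noteq> 0} \<and>
     (\<forall>\<gamma>. x \<gamma> \<noteq> 0 \<longrightarrow> gdom m iv \<gamma> = u \<and> gran m iv \<gamma> = v)}"

end

theory Submission
  imports Defs
begin

text \<open>Extend x to a Steinberg function f, placing each coefficient x \<gamma> on a compact open
  bisection around \<gamma>. Because bisections meet every fibre of d and r at most once, f agrees
  with x on all arrows with range v and on all arrows with source u; in the notation of the
  groupoid ring, v f = x = f u. If f g f = f, the restriction y = u g v satisfies
  x y x = x g x = v (f g f) u = v f u = x, which only uses the way the corner projections
  move through convolutions. Finally y has finite support, since g has compact support and
  d is locally injective on an etale groupoid.\<close>

lemma groupoid_gdom_gran_mult:
  assumes "groupoid m iv" "gdom m iv a = gran m iv b"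
  shows "gdom m iv (m a b) = gdom m iv b" "gran m iv (m a b) = gran m iv a"
  using assms unfolding groupoid_def by blast+

lemma homeo_onto_open_units_inj_on:
  "homeo_onto_open_units m iv f U \<Longrightarrow> inj_on f U"
  unfolding homeo_onto_open_units_def by (metis homeomorphism_apply1 inj_on_inverseI)

lemma open_bisection_inj_on:
  assumes "open_bisection m iv U"
  shows "inj_on (gdom m iv) U" "inj_on (gran m iv) U"
  using assms homeo_onto_open_units_inj_on unfolding open_bisection_def by blast+

lemma ample_compact_open_bisection_at:
  assumes "ample m iv"
  obtains B where "compact B" "open_bisection m iv B" "\<gamma> \<in> B"
  using assms unfolding ample_def by (metis (no_types, lifting) mem_Collect_eq open_UNIV
      topological_basisE UNIV_I)

text \<open>In the groupoid ring, restrict_dom w h is the product h w and restrict_ran w h the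
  product w h with the unit w.\<close>

definition restrict_dom :: "('g \<Rightarrow> 'g \<Rightarrow> 'g) \<Rightarrow> ('g \<Rightarrow> 'g) \<Rightarrow> 'g \<Rightarrow> ('g \<Rightarrow> 'r::zero) \<Rightarrow> 'g \<Rightarrow> 'r"
  where "restrict_dom m iv w h \<gamma> = (if gdom m iv \<gamma> = w then h \<gamma> else 0)"

definition restrict_ran :: "('g \<Rightarrow> 'g \<Rightarrow> 'g) \<Rightarrow> ('g \<Rightarrow> 'g) \<Rightarrow> 'g \<Rightarrow> ('g \<Rightarrow> 'r::zero) \<Rightarrow> 'g \<Rightarrow> 'r"
  where "restrict_ran m iv w h \<gamma> = (if gran m iv \<gamma> = w then h \<gamma> else 0)"

lemma restrict_dom_idem [simp]:
  "restrict_dom m iv w (restrict_dom m iv w h) = restrict_dom m iv w h"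
  by (simp add: restrict_dom_def fun_eq_iff)

lemma restrict_ran_idem [simp]:
  "restrict_ran m iv w (restrict_ran m iv w h) = restrict_ran m iv w h"
  by (simp add: restrict_ran_def fun_eq_iff)

lemma conv_restrict_dom_left:
  "conv m iv (restrict_dom m iv w h) k = conv m iv h (restrict_ran m iv w k)"
  unfolding conv_def restrict_dom_def restrict_ran_def fun_eq_iff
  by (intro allI sum.cong) (auto split: if_splits)

lemma conv_restrict_dom_right:
  assumes "groupoid m iv"
  shows "conv m iv h (restrict_dom m iv w k) = restrict_dom m iv w (conv m iv h k)"
proof
  fix \<gamma>
  have "gdom m iv \<beta> = gdom m iv \<gamma>"
    if "gdom m iv \<alpha> = gran m iv \<beta>" "m \<alpha> \<beta> = \<gamma>" for \<alpha> \<beta>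
    using groupoid_gdom_gran_mult[OF assms that(1)] that(2) by simp
  then show "conv m iv h (restrict_dom m iv w k) \<gamma> = restrict_dom m iv w (conv m iv h k) \<gamma>"
    unfolding conv_def restrict_dom_def
    by (cases "gdom m iv \<gamma> = w") (auto intro!: sum.cong sum.neutral)
qed

lemma conv_restrict_ran_left:
  assumes "groupoid m iv"
  shows "conv m iv (restrict_ran m iv w h) k = restrict_ran m iv w (conv m iv h k)"
proof
  fix \<gamma>
  have "gran m iv \<alpha> = gran m iv \<gamma>"
    if "gdom m iv \<alpha> = gran m iv \<beta>" "m \<alpha> \<beta> = \<gamma>" for \<alpha> \<beta>
    using groupoid_gdom_gran_mult[OF assms that(1)] that(2) by simp
  then show "conv m iv (restrict_ran m iv w h) k \<gamma> = restrict_ran m iv w (conv m iv h k) \<gamma>"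
    unfolding conv_def restrict_ran_def
    by (cases "gran m iv \<gamma> = w") (auto intro!: sum.cong sum.neutral)
qed

lemma conv_corner_inner_inverse:
  assumes "groupoid m iv"
    and fv: "restrict_ran m iv v f = x" and fu: "restrict_dom m iv u f = x"
    and fgf: "conv m iv (conv m iv f g) f = f"
  shows "conv m iv (conv m iv x (restrict_ran m iv u (restrict_dom m iv v g))) x = x"
proof -
  have xu: "restrict_dom m iv u x = x" and xv: "restrict_ran m iv v x = x"
    using fu fv by (metis restrict_dom_idem restrict_ran_idem)+
  have "conv m iv x (restrict_ran m iv u (restrict_dom m iv v g))
      = conv m iv (restrict_dom m iv u x) (restrict_dom m iv v g)"
    by (rule conv_restrict_dom_left[symmetric])
  also have "\<dots> = restrict_dom m iv v (conv m iv x g)"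
    using xu conv_restrict_dom_right[OF assms(1)] by simp
  finally have "conv m iv (conv m iv x (restrict_ran m iv u (restrict_dom m iv v g))) x
      = conv m iv (conv m iv x g) x"
    using conv_restrict_dom_left xv by metis
  also have "\<dots> = conv m iv (conv m iv (restrict_ran m iv v f) g) (restrict_dom m iv u f)"
    using fu fv by simp
  also have "\<dots> = restrict_dom m iv u (restrict_ran m iv v (conv m iv (conv m iv f g) f))"
    by (simp add: conv_restrict_dom_right[OF assms(1)] conv_restrict_ran_left[OF assms(1)])
  also have "\<dots> = x"
    using fgf fv xu by simp
  finally show ?thesis .
qed

lemma closed_subset_compact:
  assumes "compact K" "closed C" "C \<subseteq> K"
  shows "compact C"
  using compact_Int_closed[OF assms(1,2)] assms(3) by (simp add: Int_absorb1)

lemma steinberg_zero: "(\<lambda>_. 0) \<in> steinberg"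
  unfolding steinberg_def by auto

lemma steinberg_add:
  assumes "f \<in> steinberg" "g \<in> steinberg"
  shows "(\<lambda>a. f a + g a) \<in> steinberg"
proof -
  have "{a. f a + g a \<noteq> 0} \<subseteq> {a. f a \<noteq> 0} \<union> {a. g a \<noteq> 0}"
    by (rule subsetI) (metis (mono_tags) UnI1 UnI2 add.left_neutral mem_Collect_eq)
  then have "closure {a. f a + g a \<noteq> 0} \<subseteq> closure {a. f a \<noteq> 0} \<union> closure {a. g a \<noteq> 0}"
    unfolding closure_Un[symmetric] by (rule closure_mono)
  moreover have "compact (closure {a. f a \<noteq> 0} \<union> closure {a. g a \<noteq> 0})"
    using assms unfolding steinberg_def by (intro compact_Un) blast+
  ultimately have "compact (closure {a. f a + g a \<noteq> 0})"
    by (intro closed_subset_compact[OF _ closed_closure])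
  moreover have "\<exists>U. open U \<and> a \<in> U \<and> (\<forall>b\<in>U. f b + g b = f a + g a)" for a
  proof -
    obtain U V where "open U" "a \<in> U" "\<forall>b\<in>U. f b = f a" "open V" "a \<in> V" "\<forall>b\<in>V. g b = g a"
      using assms unfolding steinberg_def by blast
    then show ?thesis by (metis IntD1 IntD2 IntI open_Int)
  qed
  ultimately show ?thesis unfolding steinberg_def by blast
qed

lemma steinberg_sum:
  assumes "\<And>i. i \<in> I \<Longrightarrow> f i \<in> steinberg"
  shows "(\<lambda>a. \<Sum>i\<in>I. f i a) \<in> steinberg"
  using assms
proof (induction I rule: infinite_finite_induct)
  case (insert i I)
  then show ?case by (simp add: steinberg_add)
qed (simp_all add: steinberg_zero)

lemma steinberg_indicator:
  fixes B :: "'g::t2_space set"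
  assumes "compact B" "open B"
  shows "(\<lambda>a. if a \<in> B then c else 0) \<in> steinberg"
proof -
  have "closure {a. (if a \<in> B then c else 0) \<noteq> 0} \<subseteq> B"
    using compact_imp_closed[OF assms(1)] by (intro closure_minimal) auto
  then have "compact (closure {a. (if a \<in> B then c else 0) \<noteq> 0})"
    by (rule closed_subset_compact[OF assms(1) closed_closure])
  moreover have "\<exists>U. open U \<and> a \<in> U \<and> (\<forall>b\<in>U. (if b \<in> B then c else 0) = (if a \<in> B then c else 0))"
    for a
  proof (cases "a \<in> B")
    case True
    then show ?thesis using assms(2) by (intro exI[of _ B]) auto
  next
    case False
    then show ?thesis using compact_imp_closed[OF assms(1)] by (intro exI[of _ "- B"]) auto
  qed
  ultimately show ?thesis unfolding steinberg_def by blast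
qed

lemma groupoid_ring_hom_extend_steinberg:
  fixes m :: "'g::t2_space \<Rightarrow> 'g \<Rightarrow> 'g"
  assumes "ample m iv" "x \<in> groupoid_ring_hom m iv u v"
  obtains f where "f \<in> steinberg" "restrict_ran m iv v f = x" "restrict_dom m iv u f = x"
proof -
  have "\<forall>\<gamma>. \<exists>B. compact B \<and> open_bisection m iv B \<and> \<gamma> \<in> B"
    using ample_compact_open_bisection_at[OF assms(1)] by blast
  then obtain B where B: "\<And>\<gamma>. compact (B \<gamma>) \<and> open_bisection m iv (B \<gamma>) \<and> \<gamma> \<in> B \<gamma>"
    by metis
  define S where "S = {\<gamma>. x \<gamma> \<noteq> 0}"
  have S: "finite S" "\<And>\<gamma>. \<gamma> \<in> S \<Longrightarrow> gdom m iv \<gamma> = u \<and> gran m iv \<gamma> = v"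
    using assms(2) unfolding S_def groupoid_ring_hom_def by auto
  define f where "f a = (\<Sum>\<gamma>\<in>S. if a \<in> B \<gamma> then x \<gamma> else 0)" for a
  have restrict_f: "(\<lambda>a. if \<phi> a = c then f a else 0) = x"
    if inj: "\<And>U. open_bisection m iv U \<Longrightarrow> inj_on \<phi> U" and S_fibre: "\<And>\<gamma>. \<gamma> \<in> S \<Longrightarrow> \<phi> \<gamma> = c"
    for \<phi> :: "'g \<Rightarrow> 'g" and c
  proof
    fix a
    show "(if \<phi> a = c then f a else 0) = x a"
    proof (cases "\<phi> a = c")
      case True
      have "a \<in> B \<gamma> \<longleftrightarrow> a = \<gamma>" if "\<gamma> \<in> S" for \<gamma>
        using B[of \<gamma>] inj[of "B \<gamma>"] S_fibre[OF that] True unfolding inj_on_def by blast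
      then have "f a = (\<Sum>\<gamma>\<in>S. if a = \<gamma> then x \<gamma> else 0)"
        unfolding f_def by (intro sum.cong) simp_all
      with True S(1) show ?thesis by (simp add: S_def)
    next
      case False
      then show ?thesis using S_fibre[of a] by (auto simp: S_def)
    qed
  qed
  have "f \<in> steinberg"
    unfolding f_def using B
    by (intro steinberg_sum steinberg_indicator) (auto simp: open_bisection_def)
  moreover have "restrict_ran m iv v f = x" "restrict_dom m iv u f = x"
    unfolding restrict_ran_def restrict_dom_def using S(2) open_bisection_inj_on
    by (intro restrict_f; blast)+
  ultimately show ?thesis using that by blast
qed

lemma finite_fibre_compact_locally_injective:
  assumes "compact K" "\<And>a. a \<in> K \<Longrightarrow> \<exists>U. open U \<and> a \<in> U \<and> inj_on \<phi> U"
  shows "finite {a \<in> K. \<phi> a = c}"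
proof -
  obtain U where U: "\<And>a. a \<in> K \<Longrightarrow> open (U a) \<and> a \<in> U a \<and> inj_on \<phi> (U a)"
    using assms(2) by metis
  obtain D where D: "D \<subseteq> K" "finite D" "K \<subseteq> (\<Union>a\<in>D. U a)"
    using compactE_image[OF assms(1), of K U] U by blast
  have "{a \<in> K. \<phi> a = c} \<subseteq> (\<Union>a\<in>D. \<phi> -` {c} \<inter> U a)"
    using D(3) by blast
  moreover have "finite (\<Union>a\<in>D. \<phi> -` {c} \<inter> U a)"
    using D U by (intro finite_UN_I finite_vimage_IntI) auto
  ultimately show ?thesis by (rule finite_subset)
qed

lemma etale_steinberg_finite_fibre:
  assumes "etale m iv" "g \<in> steinberg"
  shows "finite {\<beta>. g \<beta> \<noteq> 0 \<and> gdom m iv \<beta> = w}"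
proof -
  have "\<exists>U. open U \<and> a \<in> U \<and> inj_on (gdom m iv) U" for a
    using assms(1) homeo_onto_open_units_inj_on unfolding etale_def by metis
  moreover have "compact (closure {\<beta>. g \<beta> \<noteq> 0})"
    using assms(2) unfolding steinberg_def by blast
  ultimately have "finite {\<beta> \<in> closure {\<beta>. g \<beta> \<noteq> 0}. gdom m iv \<beta> = w}"
    by (intro finite_fibre_compact_locally_injective)
  then show ?thesis
    by (rule finite_subset[rotated]) (auto intro: closure_subset[THEN subsetD])
qed

theorem proposition3p1:
  fixes m :: "'g::t2_space \<Rightarrow> 'g \<Rightarrow> 'g" and iv :: "'g \<Rightarrow> 'g"
  assumes "ample m iv"
    and "von_neumann_regular_steinberg m iv TYPE('r::comm_ring_1)"
    and "u \<in> unit_space m iv" and "v \<in> unit_space m iv"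
    and "x \<in> (groupoid_ring_hom m iv u v :: ('g \<Rightarrow> 'r) set)"
  shows "\<exists>y \<in> groupoid_ring_hom m iv v u. conv m iv (conv m iv x y) x = x"
proof -
  have etale: "etale m iv" and grp: "groupoid m iv"
    using assms(1) unfolding ample_def etale_def topological_groupoid_def by blast+
  obtain f where f: "f \<in> steinberg" "restrict_ran m iv v f = x" "restrict_dom m iv u f = x"
    using groupoid_ring_hom_extend_steinberg[OF assms(1,5)] .
  obtain g :: "'g \<Rightarrow> 'r" where g: "g \<in> steinberg" "conv m iv (conv m iv f g) f = f"
    using assms(2) f(1) unfolding von_neumann_regular_steinberg_def by blast
  define y where "y = restrict_ran m iv u (restrict_dom m iv v g)"
  have "finite {\<beta>. y \<beta> \<noteq> 0}"
    using etale_steinberg_finite_fibre[OF etale g(1), of v]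
    by (rule finite_subset[rotated]) (auto simp: y_def restrict_ran_def restrict_dom_def)
  then have "y \<in> groupoid_ring_hom m iv v u"
    by (auto simp: groupoid_ring_hom_def y_def restrict_ran_def restrict_dom_def)
  moreover have "conv m iv (conv m iv x y) x = x"
    unfolding y_def using conv_corner_inner_inverse[OF grp f(2,3) g(2)] .
  ultimately show ?thesis by blast
qed

end
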